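(* Let $X$ be a random variable with cumulative distribution function $F_X$ satisfying $F_X(x)=0$ for all $x\le 0$, and define the even function $k$ by \[ k(r)=\int_0^{\infty}\max\left\{0,1-\frac{|r|}{x}\right\}\,dF_X(x),\qquad r\in\mathbb{R}. \] Suppose $C:=\int_{-\infty}^{\infty}\frac{dF_X(x)}{x}$ is finite, and let $\widetilde{X}$ be a random variable with cumulative distribution function $F_{\widetilde{X}}(x)=\int_{-\infty}^{x}\frac{dF_X(t)}{Ct}$. Let $\varphi_{\widetilde{X}}(t)=E[e^{\mathbf{i} t\widetilde{X}}]$ denote the characteristic function of $\widetilde{X}$. Then \[ k(r)=[1-F_X(r)]-Cr\,[1-F_{\widetilde{X}}(r)],\qquad r\ge 0, \] and the Fourier transform of $k$ is \[ \mathcal{F}[k](t)=\frac{C}{t^2}\left[2-\varphi_{\widetilde{X}}(t)-\varphi_{\widetilde{X}}(-t)\right]. \]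
   Context: The Fourier transform is $\mathcal{F}[k](t)=\int_{-\infty}^{\infty}k(r)e^{\mathbf{i} rt}\,dr$, understood in the sense of generalized functions when $k$ is not absolutely integrable. Integrals against $dF$ are Lebesgue–Stieltjes integrals. *)

theory Defs
  imports "HOL-Probability.Probability"
begin

fun nderiv :: "nat \<Rightarrow> (real \<Rightarrow> complex) \<Rightarrow> real \<Rightarrow> complex" where
  "nderiv 0 f = f"
| "nderiv (Suc n) f = (\<lambda>x. vector_derivative (nderiv n f) (at x))"

definition test_function :: "(real \<Rightarrow> complex) \<Rightarrow> bool" where
  "test_function \<psi> \<longleftrightarrow>
     (\<forall>n x. nderiv n \<psi> differentiable (at x)) \<and> (\<exists>B. \<forall>x. \<bar>x\<bar> > B \<longrightarrow> \<psi> x = 0)"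

definition fourier :: "(real \<Rightarrow> complex) \<Rightarrow> real \<Rightarrow> complex" where
  "fourier \<psi> t = (LBINT r. \<psi> r * iexp (r * t))"

text \<open>The Fourier transform of a (locally integrable) function k, in the sense of
  generalized functions, equals the function g: tested against every test function.\<close>
definition fourier_gen_eq :: "(real \<Rightarrow> complex) \<Rightarrow> (real \<Rightarrow> complex) \<Rightarrow> bool" where
  "fourier_gen_eq k g \<longleftrightarrow>
     (\<forall>\<psi>. test_function \<psi> \<longrightarrow>
        integrable lborel (\<lambda>r. k r * fourier \<psi> r) \<and>
        integrable lborel (\<lambda>t. g t * \<psi> t) \<and>
        (LBINT r. k r * fourier \<psi> r) = (LBINT t. g t * \<psi> t))"

end

theory Submission
  imports Defs
begin

text \<open>
  For \<open>a > 0\<close> the tent \<open>r \<mapsto> max 0 (1 - \<bar>r\<bar> / a)\<close> has Fourier transform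
  \<open>(2 - iexp (a t) - iexp (- a t)) / (a t\<^sup>2)\<close>, and \<open>k\<close> is the mixture of these tents over the law of \<open>X\<close>,
  which is concentrated on \<open>(0, \<infinity>)\<close>. Pairing \<open>k\<close> with the Fourier transform of a test function
  and applying Fubini twice (the transforms are bounded by \<open>8a / (1 + (a t)\<^sup>2)\<close>, whose integral
  does not depend on \<open>a\<close>) gives the mixture of the transforms. Pulling the weight \<open>1 / a\<close> out of
  each transform turns this mixture into \<open>C / t\<^sup>2\<close> times a combination of characteristic functions
  of the law with density \<open>1 / (C x)\<close> with respect to that of \<open>X\<close>, which is the law of \<open>X\<^sup>~\<close> by
  uniqueness of distribution functions. The formula for \<open>k\<close> on \<open>r \<ge> 0\<close> is the mixture of
  \<open>1 - r / a\<close> over \<open>a > r\<close>.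
\<close>

section \<open>Test functions and their Fourier transforms\<close>

lemma has_vector_derivative_mult_iexp:
  assumes "(f has_vector_derivative f') (at t within S)"
  shows "((\<lambda>t. f t * iexp (t * r)) has_vector_derivative
           (f' + \<i> * r * f t) * iexp (t * r)) (at t within S)"
proof -
  have "((\<lambda>t. t * r) has_vector_derivative r) (at t within S)"
    by (auto intro!: derivative_eq_intros)
  from vector_diff_chain_within[OF this has_vector_derivative_iexp]
  have "((\<lambda>t. iexp (t * r)) has_vector_derivative \<i> * r * iexp (t * r)) (at t within S)"
    by (simp add: o_def scaleR_conv_of_real mult.assoc mult.left_commute[of "complex_of_real r"])
  from has_vector_derivative_mult[OF assms this] show ?thesis
    by (simp add: algebra_simps)
qed

lemma
  fixes h :: "real \<Rightarrow> 'b::euclidean_space"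
  assumes "continuous_on UNIV h" and "\<And>x. \<bar>x\<bar> > B \<Longrightarrow> h x = 0"
  shows integrable_compact_support: "integrable lborel h"
    and integral_compact_support: "integral\<^sup>L lborel h = integral {-B..B} h"
proof -
  have h_eq: "h = (\<lambda>x. indicator {-B..B} x *\<^sub>R h x)"
    using assms(2) by (auto simp: indicator_def abs_le_iff fun_eq_iff not_le)
  have h_set_integrable: "set_integrable lborel {-B..B} h"
    unfolding set_integrable_def
    by (rule borel_integrable_compact) (auto intro: continuous_on_subset[OF assms(1)])
  then show "integrable lborel h"
    unfolding set_integrable_def by (subst h_eq)
  have "integral\<^sup>L lborel h = (LINT x:{-B..B}|lborel. h x)"
    unfolding set_lebesgue_integral_def by (subst h_eq) simp
  also have "\<dots> = integral {-B..B} h"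
    by (rule set_borel_integral_eq_integral(2)[OF h_set_integrable])
  finally show "integral\<^sup>L lborel h = integral {-B..B} h" .
qed

text \<open>Integration by parts against \<open>iexp\<close>: the boundary terms vanish.\<close>
lemma fourier_deriv:
  assumes f': "\<And>x. (f has_vector_derivative f' x) (at x)" "continuous_on UNIV f'"
    and support: "\<And>x. \<bar>x\<bar> > B \<Longrightarrow> f x = 0 \<and> f' x = 0"
  shows "fourier f' r = - (\<i> * r) * fourier f r"
proof -
  define B' where "B' = \<bar>B\<bar> + 1"
  have f_cont: "continuous_on UNIV f"
    using f'(1) by (meson continuous_at_imp_continuous_on has_vector_derivative_continuous)
  define g where "g t = (f' t + \<i> * r * f t) * iexp (t * r)" for t
  have "((\<lambda>t. f t * iexp (t * r)) has_vector_derivative g t) (at t within {-B'..B'})" for t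
    unfolding g_def by (rule has_vector_derivative_mult_iexp[OF has_vector_derivative_at_within[OF f'(1)]])
  then have "(g has_integral (f B' * iexp (B' * r) - f (-B') * iexp (-B' * r))) {-B'..B'}"
    by (intro fundamental_theorem_of_calculus) (auto simp: B'_def)
  moreover have "f B' = 0" "f (-B') = 0"
    using support[of B'] support[of "-B'"] unfolding B'_def by auto
  ultimately have "integral {-B'..B'} g = 0"
    by (simp add: integral_unique)
  moreover have "integral\<^sup>L lborel g = integral {-B'..B'} g"
    by (rule integral_compact_support) (use support in \<open>auto simp: g_def B'_def intro!: continuous_intros f'(2) f_cont\<close>)
  moreover have "integrable lborel (\<lambda>t. f' t * iexp (t * r))"
    by (rule integrable_compact_support[where B=B]) (use support in \<open>auto intro!: continuous_intros f'(2)\<close>)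
  moreover have "integrable lborel (\<lambda>t. f t * iexp (t * r))"
    by (rule integrable_compact_support[where B=B]) (use support in \<open>auto intro!: continuous_intros f_cont\<close>)
  then have "integrable lborel (\<lambda>t. \<i> * r * (f t * iexp (t * r)))"
    by (rule integrable_mult_right)
  ultimately have "fourier f' r + \<i> * r * fourier f r = 0"
    unfolding fourier_def g_def distrib_right
    by (simp add: integral_mult_right_zero mult.assoc)
  then show ?thesis
    by (simp add: eq_neg_iff_add_eq_0)
qed

lemma nderiv_eq_0_outside:
  assumes "\<forall>n x. nderiv n \<psi> differentiable (at x)" and "\<forall>x. \<bar>x\<bar> > B \<longrightarrow> \<psi> x = 0"
    and "\<bar>x\<bar> > B"
  shows "nderiv n \<psi> x = 0"
  using assms(3)
proof (induction n arbitrary: x)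
  case 0
  then show ?case using assms(2) by simp
next
  case (Suc n)
  have "((\<lambda>_. 0) has_vector_derivative 0) (at x)"
    by simp
  then have "(nderiv n \<psi> has_vector_derivative 0) (at x)"
    by (rule has_vector_derivative_transform_within_open[where S="{y. \<bar>y\<bar> > B}"])
       (use Suc in \<open>auto intro!: open_Collect_less continuous_intros\<close>)
  then show ?case
    by (simp add: vector_derivative_at)
qed

lemma test_functionE:
  assumes "test_function \<psi>"
  obtains B where "B > 0" "\<And>x n. \<bar>x\<bar> > B \<Longrightarrow> nderiv n \<psi> x = 0"
    "\<And>n. continuous_on UNIV (nderiv n \<psi>)"
    "\<And>n x. (nderiv n \<psi> has_vector_derivative nderiv (Suc n) \<psi> x) (at x)"
proof -
  from assms obtain B where diff: "\<forall>n x. nderiv n \<psi> differentiable (at x)"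
    and support: "\<forall>x. \<bar>x\<bar> > B \<longrightarrow> \<psi> x = 0"
    unfolding test_function_def by blast
  have "\<forall>x. \<bar>x\<bar> > \<bar>B\<bar> + 1 \<longrightarrow> \<psi> x = 0"
    using support by auto
  with diff show ?thesis
    by (intro that[of "\<bar>B\<bar> + 1"] nderiv_eq_0_outside)
       (auto simp: vector_derivative_works[symmetric] intro: continuous_at_imp_continuous_on
             differentiable_imp_continuous_within)
qed

lemma
  assumes "test_function \<psi>"
  shows test_function_continuous: "continuous_on UNIV \<psi>"
    and test_function_integrable: "integrable lborel \<psi>"
    and borel_measurable_test_function: "\<psi> \<in> borel_measurable borel"
proof -
  obtain B where B: "\<And>x n. \<bar>x\<bar> > B \<Longrightarrow> nderiv n \<psi> x = 0"
    "\<And>n. continuous_on UNIV (nderiv n \<psi>)"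
    by (rule test_functionE[OF assms]) blast
  have support: "\<And>x. \<bar>x\<bar> > B \<Longrightarrow> \<psi> x = 0" and cont: "continuous_on UNIV \<psi>"
    using B(1)[of _ 0] B(2)[of 0] by simp_all
  then show "continuous_on UNIV \<psi>" "integrable lborel \<psi>" "\<psi> \<in> borel_measurable borel"
    using integrable_compact_support[OF cont support] borel_measurable_continuous_onI[OF cont]
    by simp_all
qed

lemma test_function_bounded:
  assumes "test_function \<psi>"
  obtains K where "\<And>t. norm (\<psi> t) \<le> K"
proof -
  obtain B where B: "B > 0" "\<And>x n. \<bar>x\<bar> > B \<Longrightarrow> nderiv n \<psi> x = 0"
    by (rule test_functionE[OF assms]) blast
  have "compact (\<psi> ` {-B..B})"
    by (intro compact_continuous_image continuous_on_subset[OF test_function_continuous[OF assms]]) auto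
  then have "bounded (\<psi> ` {-B..B})"
    by (rule compact_imp_bounded)
  then obtain K where K: "\<And>y. y \<in> \<psi> ` {-B..B} \<Longrightarrow> norm y \<le> K"
    unfolding bounded_iff by blast
  have "\<psi> 0 \<in> \<psi> ` {-B..B}"
    using B(1) by simp
  then have "0 \<le> K"
    using K norm_ge_zero order_trans by blast
  have "norm (\<psi> t) \<le> K" for t
  proof (cases "\<bar>t\<bar> > B")
    case True
    then show ?thesis using B(2)[of t 0] \<open>0 \<le> K\<close> by simp
  next
    case False
    then have "t \<in> {-B..B}"
      by auto
    then show ?thesis using K[of "\<psi> t"] by simp
  qed
  then show ?thesis by (rule that)
qed

lemma norm_fourier_le: "norm (fourier f r) \<le> (LBINT t. norm (f t))"
  using integral_norm_bound[of lborel "\<lambda>t. f t * iexp (t * r)"]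
  by (simp add: fourier_def norm_mult)

text \<open>Two integrations by parts give \<open>r\<^sup>2 fourier \<psi> r = - fourier \<psi>'' r\<close>, hence quadratic decay.\<close>
lemma fourier_test_function_decay:
  assumes "test_function \<psi>"
  obtains K where "\<And>r. norm (fourier \<psi> r) \<le> K / (1 + r\<^sup>2)"
proof -
  obtain B where B: "\<And>x n. \<bar>x\<bar> > B \<Longrightarrow> nderiv n \<psi> x = 0"
    "\<And>n. continuous_on UNIV (nderiv n \<psi>)"
    "\<And>n x. (nderiv n \<psi> has_vector_derivative nderiv (Suc n) \<psi> x) (at x)"
    by (rule test_functionE[OF assms]) blast
  have fourier_Suc: "fourier (nderiv (Suc n) \<psi>) r = - (\<i> * r) * fourier (nderiv n \<psi>) r" for n r
    by (rule fourier_deriv[where B=B]) (use B in \<open>auto simp del: nderiv.simps(2)\<close>)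
  have "fourier (nderiv 2 \<psi>) r = - (r\<^sup>2) * fourier \<psi> r" for r
    using fourier_Suc[of 1 r] fourier_Suc[of 0 r]
    by (simp add: numeral_2_eq_2 power2_eq_square algebra_simps)
  then have "r\<^sup>2 * norm (fourier \<psi> r) \<le> (LBINT t. norm (nderiv 2 \<psi> t))" for r
    using norm_fourier_le[of "nderiv 2 \<psi>" r] by (simp add: norm_mult norm_power)
  moreover have "norm (fourier \<psi> r) \<le> (LBINT t. norm (\<psi> t))" for r
    by (rule norm_fourier_le)
  ultimately have "norm (fourier \<psi> r) * (1 + r\<^sup>2)
      \<le> (LBINT t. norm (\<psi> t)) + (LBINT t. norm (nderiv 2 \<psi> t))" for r
    by (simp add: distrib_left add_mono mult.commute)
  then show ?thesis
    by (intro that) (simp add: pos_le_divide_eq add_pos_nonneg)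
qed

lemma
  assumes "test_function \<psi>"
  shows borel_measurable_fourier: "fourier \<psi> \<in> borel_measurable borel"
    and integrable_fourier: "integrable lborel (fourier \<psi>)"
proof -
  have [measurable]: "\<psi> \<in> borel_measurable borel"
    by (rule borel_measurable_test_function[OF assms])
  have "(\<lambda>(r, t). \<psi> t * iexp (t * r)) \<in> borel_measurable (lborel \<Otimes>\<^sub>M lborel)"
    by measurable
  then show fourier_measurable: "fourier \<psi> \<in> borel_measurable borel"
    unfolding fourier_def using lborel.borel_measurable_lebesgue_integral by simp
  obtain K where K: "\<And>r. norm (fourier \<psi> r) \<le> K / (1 + r\<^sup>2)"
    using fourier_test_function_decay[OF assms] by blast
  have "integrable lborel (\<lambda>r. K * inverse (1 + r\<^sup>2))"
    using integrable_inverse_1_plus_square by (simp add: set_integrable_def)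
  moreover have "norm (fourier \<psi> r) \<le> norm (K * inverse (1 + r\<^sup>2))" for r
    using K[of r] by (simp add: divide_inverse)
  ultimately show "integrable lborel (fourier \<psi>)"
    by (elim Bochner_Integration.integrable_bound) (simp_all add: fourier_measurable)
qed

section \<open>Tents\<close>

lemma has_integral_affine_mult_iexp:
  assumes "c \<le> d"
  shows "((\<lambda>r. (\<alpha> + \<i> * t * (of_real r * \<alpha> + \<beta>)) * iexp (r * t)) has_integral
     ((of_real d * \<alpha> + \<beta>) * iexp (d * t) - (of_real c * \<alpha> + \<beta>) * iexp (c * t))) {c..d}"
proof -
  have "((\<lambda>r. (of_real r * \<alpha> + \<beta>) * iexp (r * t)) has_vector_derivative
      (\<alpha> + \<i> * t * (of_real r * \<alpha> + \<beta>)) * iexp (r * t)) (at r within {c..d})" for r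
  proof -
    have "((\<lambda>r. of_real r * \<alpha> + \<beta>) has_vector_derivative \<alpha>) (at r within {c..d})"
      by (auto intro!: derivative_eq_intros)
    from has_vector_derivative_mult_iexp[OF this, of t] show ?thesis
      by (simp add: algebra_simps)
  qed
  then show ?thesis
    using assms by (intro fundamental_theorem_of_calculus) auto
qed

definition tent :: "real \<Rightarrow> real \<Rightarrow> real" where
  "tent a r = max 0 (1 - \<bar>r\<bar> / a)"

text \<open>The Fourier transform of \<open>tent a\<close> for \<open>t \<noteq> 0\<close>; the junk value at \<open>t = 0\<close> is \<open>0\<close>,
  matching \<open>C / 0\<^sup>2 = 0\<close> in the theorem.\<close>
definition tent_fourier :: "real \<Rightarrow> real \<Rightarrow> complex" where
  "tent_fourier a t = (2 - iexp (a * t) - iexp (- (a * t))) / complex_of_real (a * t\<^sup>2)"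

lemma tent_nonneg: "tent a r \<ge> 0"
  by (simp add: tent_def)

lemma tent_le_1: "a > 0 \<Longrightarrow> tent a r \<le> 1"
  by (simp add: tent_def)

lemma borel_measurable_tent [measurable]: "(\<lambda>(a, r). tent a r) \<in> borel_measurable (borel \<Otimes>\<^sub>M borel)"
  unfolding tent_def by measurable

lemma borel_measurable_tent_fourier [measurable]: "(\<lambda>(a, t). tent_fourier a t) \<in> borel_measurable (borel \<Otimes>\<^sub>M borel)"
  unfolding tent_fourier_def by measurable

lemma continuous_tent: "a > 0 \<Longrightarrow> continuous_on UNIV (tent a)"
  unfolding tent_def by (intro continuous_intros) auto

lemma integrable_tent: "a > 0 \<Longrightarrow> integrable lborel (tent a)"
  by (rule integrable_compact_support[OF continuous_tent, of _ a]) (auto simp: tent_def)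

lemma has_integral_tent_iexp_right:
  assumes a: "a > 0" and t: "t \<noteq> 0"
  shows "((\<lambda>r. complex_of_real (tent a r) * iexp (r * t)) has_integral
      (1 - iexp (a * t)) / complex_of_real (a * t\<^sup>2) - 1 / (\<i> * t)) {0..a}"
proof -
  text \<open>On \<open>[0, a]\<close> the integrand is \<open>(\<alpha> + \<i> t (r \<alpha> + \<beta>)) iexp (r t)\<close> with these \<open>\<alpha>, \<beta>\<close>.\<close>
  define \<alpha> where "\<alpha> = \<i> / of_real (a * t)"
  define \<beta> where "\<beta> = 1 / (\<i> * t) - 1 / of_real (a * t\<^sup>2)"
  have "((\<lambda>r. complex_of_real (tent a r) * iexp (r * t)) has_integral
    ((of_real a * \<alpha> + \<beta>) * iexp (a * t) - (of_real 0 * \<alpha> + \<beta>) * iexp (0 * t))) {0..a}"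
  proof (rule has_integral_eq[OF _ has_integral_affine_mult_iexp[of 0 a]])
    fix r assume "r \<in> {0..a}"
    then have "complex_of_real (tent a r) = 1 - of_real r / of_real a"
      using a by (auto simp: tent_def field_simps)
    then show "(\<alpha> + \<i> * t * (of_real r * \<alpha> + \<beta>)) * iexp (r * t) = complex_of_real (tent a r) * iexp (r * t)"
      using a t by (simp only: \<open>complex_of_real (tent a r) = _\<close>) (simp add: \<alpha>_def \<beta>_def field_simps power2_eq_square)
  qed (use a in auto)
  moreover have "(of_real a * \<alpha> + \<beta>) * iexp (a * t) - (of_real 0 * \<alpha> + \<beta>) * iexp (0 * t)
      = (1 - iexp (a * t)) / complex_of_real (a * t\<^sup>2) - 1 / (\<i> * t)"
    using a t by (simp add: \<alpha>_def \<beta>_def field_simps power2_eq_square)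
  ultimately show ?thesis
    by simp
qed

text \<open>The left half is the right half at \<open>- t\<close>, reflected.\<close>
lemma integral_tent_iexp:
  assumes a: "a > 0" and t: "t \<noteq> 0"
  shows "(LBINT r. complex_of_real (tent a r) * iexp (r * t)) = tent_fourier a t"
proof -
  let ?f = "\<lambda>s r. complex_of_real (tent a r) * iexp (r * s)"
  have "((\<lambda>r. ?f (- t) (- r)) has_integral
      (1 - iexp (- (a * t))) / complex_of_real (a * t\<^sup>2) + 1 / (\<i> * t)) {-a..0}"
    using has_integral_reflect_lemma_real[OF has_integral_tent_iexp_right[OF a, of "- t"]] t by simp
  moreover have "?f (- t) (- r) = ?f t r" for r
    by (simp add: tent_def)
  ultimately have left: "(?f t has_integral
      (1 - iexp (- (a * t))) / complex_of_real (a * t\<^sup>2) + 1 / (\<i> * t)) {-a..0}"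
    by simp
  have "(?f t has_integral
      ((1 - iexp (- (a * t))) / complex_of_real (a * t\<^sup>2) + 1 / (\<i> * t))
      + ((1 - iexp (a * t)) / complex_of_real (a * t\<^sup>2) - 1 / (\<i> * t))) {-a..a}"
    using a by (intro has_integral_combine[OF _ _ left has_integral_tent_iexp_right[OF a t]]) auto
  moreover have "((1 - iexp (- (a * t))) / complex_of_real (a * t\<^sup>2) + 1 / (\<i> * t))
      + ((1 - iexp (a * t)) / complex_of_real (a * t\<^sup>2) - 1 / (\<i> * t)) = tent_fourier a t"
    unfolding tent_fourier_def by (simp add: diff_divide_distrib add_divide_distrib)
  ultimately have "(?f t has_integral tent_fourier a t) {-a..a}"
    by simp
  moreover have "continuous_on UNIV (?f t)"
    using continuous_tent[OF a] by (intro continuous_intros) (auto intro: continuous_on_compose2)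
  moreover have "\<bar>r\<bar> > a \<Longrightarrow> ?f t r = 0" for r
    using a by (simp add: tent_def)
  ultimately show ?thesis
    using integral_compact_support[of "?f t" a] by (simp add: integral_unique)
qed

lemma two_minus_iexp_eq: "2 - iexp u - iexp (- u) = complex_of_real (2 - 2 * cos u)"
proof -
  have "iexp u = cis u" "iexp (- u) = cis (- u)"
    by (simp_all add: cis_conv_exp)
  then show ?thesis
    by (simp add: complex_eq_iff)
qed

lemma one_minus_cos_le: "1 - cos (u::real) \<le> u\<^sup>2 / 2"
proof -
  have "1 - cos u = 2 * (sin (u / 2))\<^sup>2"
    using cos_double_sin[of "u / 2"] by simp
  also have "\<dots> \<le> 2 * (u / 2)\<^sup>2"
    using abs_sin_x_le_abs_x[of "u / 2"] abs_le_square_iff by (metis mult_left_mono zero_le_numeral)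
  finally show ?thesis
    by (simp add: power2_eq_square)
qed

text \<open>Both \<open>a\<close> and \<open>4 / (a t\<^sup>2)\<close> bound the norm; the combined bound has an integral over \<open>t\<close>
  independent of \<open>a\<close>, which makes the mixture over \<open>a\<close> integrable.\<close>
lemma norm_tent_fourier_le:
  assumes a: "a > 0"
  shows "norm (tent_fourier a t) \<le> 8 * a / (1 + (a * t)\<^sup>2)"
proof (cases "t = 0")
  case True
  then show ?thesis using a by (simp add: tent_fourier_def)
next
  case t: False
  have norm_eq: "norm (tent_fourier a t) = (2 - 2 * cos (a * t)) / (a * t\<^sup>2)"
    unfolding tent_fourier_def two_minus_iexp_eq norm_divide norm_of_real
    using a cos_le_one[of "a * t"] by simp
  have at: "(a * t)\<^sup>2 > 0"
    using a t by simp
  show ?thesis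
  proof (cases "(a * t)\<^sup>2 \<le> 1")
    case True
    have "norm (tent_fourier a t) \<le> (a * t)\<^sup>2 / (a * t\<^sup>2)"
      unfolding norm_eq using one_minus_cos_le[of "a * t"] a t by (intro divide_right_mono) auto
    also have "\<dots> = a"
      using a t by (simp add: power2_eq_square field_simps)
    also have "\<dots> \<le> 8 * a / (1 + (a * t)\<^sup>2)"
      using True a at by (simp add: field_simps)
    finally show ?thesis .
  next
    case False
    have "norm (tent_fourier a t) \<le> 4 / (a * t\<^sup>2)"
      unfolding norm_eq using a t cos_ge_minus_one[of "a * t"] by (intro divide_right_mono) (linarith, simp)
    also have "\<dots> = 4 * a / (a * t)\<^sup>2"
      using a t by (simp add: power2_eq_square field_simps)
    also have "\<dots> \<le> 8 * a / (1 + (a * t)\<^sup>2)"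
      using False a at by (simp add: field_simps)
    finally show ?thesis .
  qed
qed

lemma
  fixes a :: real
  assumes a: "a > 0"
  shows integrable_scaled_inverse_1_plus_square: "integrable lborel (\<lambda>t. a / (1 + (a * t)\<^sup>2))"
    and integral_scaled_inverse_1_plus_square: "(LBINT t. a / (1 + (a * t)\<^sup>2)) = pi"
proof -
  have "integrable lborel (\<lambda>u. inverse (1 + u\<^sup>2 :: real))"
    using integrable_inverse_1_plus_square by (simp add: set_integrable_def)
  from lborel_integrable_real_affine[OF this, of a 0]
  show "integrable lborel (\<lambda>t. a / (1 + (a * t)\<^sup>2))"
    using a by (simp add: divide_inverse)
  have "(LBINT u. inverse (1 + u\<^sup>2)) = pi"
    using LBINT_inverse_1_plus_square
    by (simp add: interval_lebesgue_integral_def set_lebesgue_integral_def)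
  then show "(LBINT t. a / (1 + (a * t)\<^sup>2)) = pi"
    using lborel_integral_real_affine[of a "\<lambda>u. inverse (1 + u\<^sup>2)" 0] a
    by (simp add: divide_inverse)
qed

lemma integral_tent_fourier_pairing:
  assumes a: "a > 0" and \<psi>: "test_function \<psi>"
  shows "(LBINT r. complex_of_real (tent a r) * fourier \<psi> r) = (LBINT t. \<psi> t * tent_fourier a t)"
proof -
  have [measurable]: "\<psi> \<in> borel_measurable borel"
    by (rule borel_measurable_test_function[OF \<psi>])
  define f where "f r t = complex_of_real (tent a r) * (\<psi> t * iexp (t * r))" for r t
  have f_measurable: "(\<lambda>(r, t). f r t) \<in> borel_measurable (lborel \<Otimes>\<^sub>M lborel)"
    unfolding f_def by measurable
  have "integrable lborel (\<lambda>t. \<psi> t * iexp (t * r))" for r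
    by (rule Bochner_Integration.integrable_bound[OF integrable_norm[OF test_function_integrable[OF \<psi>]]])
       (auto simp: norm_mult)
  moreover have "(\<lambda>r. LBINT t. norm (f r t)) = (\<lambda>r. tent a r * (LBINT t. norm (\<psi> t)))"
    by (simp add: f_def norm_mult tent_nonneg)
  ultimately have f_integrable: "integrable (lborel \<Otimes>\<^sub>M lborel) (\<lambda>(r, t). f r t)"
    using integrable_tent[OF a] f_measurable
    by (intro lborel_pair.Fubini_integrable) (auto simp: f_def)
  have "(LBINT r. complex_of_real (tent a r) * fourier \<psi> r) = (LBINT r. LBINT t. f r t)"
    unfolding f_def fourier_def by (simp add: integral_mult_right_zero)
  also have "\<dots> = (LBINT t. LBINT r. f r t)"
    using lborel_pair.Fubini_integral[of f] f_integrable by simp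
  also have "\<dots> = (LBINT t. \<psi> t * tent_fourier a t)"
  proof (rule integral_cong_AE)
    have inner: "(LBINT r. f r t) = \<psi> t * (LBINT r. complex_of_real (tent a r) * iexp (r * t))" for t
      unfolding f_def by (simp add: integral_mult_right_zero ac_simps)
    show "AE t in lborel. (LBINT r. f r t) = \<psi> t * tent_fourier a t"
      using AE_lborel_singleton[of 0] by eventually_elim (metis inner integral_tent_iexp[OF a])
    show "(\<lambda>t. LBINT r. f r t) \<in> borel_measurable lborel"
      using f_measurable by measurable
    show "(\<lambda>t. \<psi> t * tent_fourier a t) \<in> borel_measurable lborel"
      by measurable
  qed
  finally show ?thesis .
qed

section \<open>Mixtures of tents\<close>

context real_distribution
begin

lemma integrable_tent_mixture:
  assumes "AE a in M. a > 0"
  shows "integrable M (\<lambda>a. tent a r)" and "(LINT a|M. tent a r) \<in> {0..1}"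
proof -
  have bounded: "AE a in M. norm (tent a r) \<le> 1"
    using assms by eventually_elim (simp add: tent_nonneg tent_le_1)
  then show integrable: "integrable M (\<lambda>a. tent a r)"
    by (intro integrable_const_bound[where B=1]) measurable
  have "(LINT a|M. tent a r) \<le> (LINT a|M. 1)"
    using bounded by (intro integral_mono_AE[OF integrable]) (auto simp: tent_nonneg)
  moreover have "(LINT a|M. tent a r) \<ge> 0"
    by (intro integral_nonneg_AE) (simp add: tent_nonneg)
  ultimately show "(LINT a|M. tent a r) \<in> {0..1}"
    using prob_space by simp
qed

lemma integrable_pair_tent_mixture:
  fixes F :: "real \<Rightarrow> complex"
  assumes pos: "AE a in M. a > 0" and F: "integrable lborel F"
  shows "integrable (lborel \<Otimes>\<^sub>M M) (\<lambda>(r, a). complex_of_real (tent a r) * F r)"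
proof -
  interpret pair_sigma_finite lborel M
    by (intro pair_sigma_finite.intro lborel.sigma_finite_measure_axioms sigma_finite_measure_axioms)
  have [measurable]: "F \<in> borel_measurable borel"
    using borel_measurable_integrable[OF F] by simp
  have "(LINT a|M. norm (complex_of_real (tent a r) * F r)) \<le> norm (F r)" for r
    using integrable_tent_mixture[OF pos, of r] by (simp add: norm_mult tent_nonneg mult_left_le_one_le)
  then have "integrable lborel (\<lambda>r. LINT a|M. norm (complex_of_real (tent a r) * F r))"
    by (intro Bochner_Integration.integrable_bound[OF integrable_norm[OF F]] AE_I2) auto
  moreover have "integrable M (\<lambda>a. complex_of_real (tent a r) * F r)" for r
    using integrable_tent_mixture(1)[OF pos] by (intro integrable_mult_left integrable_of_real)
  ultimately show ?thesis
    by (intro Fubini_integrable) auto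
qed

lemma integrable_pair_tent_fourier:
  fixes \<psi> :: "real \<Rightarrow> complex"
  assumes pos: "AE a in M. a > 0" and \<psi>: "test_function \<psi>"
  shows "integrable (M \<Otimes>\<^sub>M lborel) (\<lambda>(a, t). \<psi> t * tent_fourier a t)"
proof -
  interpret pair_sigma_finite M lborel
    by (intro pair_sigma_finite.intro lborel.sigma_finite_measure_axioms sigma_finite_measure_axioms)
  have [measurable]: "\<psi> \<in> borel_measurable borel"
    by (rule borel_measurable_test_function[OF \<psi>])
  obtain K where K: "\<And>t. norm (\<psi> t) \<le> K"
    using test_function_bounded[OF \<psi>] by blast
  then have "K \<ge> 0"
    using norm_ge_zero order_trans by blast
  have integrable_slice: "integrable lborel (\<lambda>t. \<psi> t * tent_fourier a t)"
    and integral_slice: "(LBINT t. norm (\<psi> t * tent_fourier a t)) \<le> 8 * K * pi" if "a > 0" for a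
  proof -
    have bound: "norm (\<psi> t * tent_fourier a t) \<le> 8 * K * (a / (1 + (a * t)\<^sup>2))" for t
      unfolding norm_mult using mult_mono[OF K[of t] norm_tent_fourier_le[OF that, of t] \<open>K \<ge> 0\<close> norm_ge_zero]
      by (simp add: mult.commute mult.left_commute)
    have majorant: "integrable lborel (\<lambda>t. 8 * K * (a / (1 + (a * t)\<^sup>2)))"
      using integrable_mult_right[OF integrable_scaled_inverse_1_plus_square[OF that], of "8 * K"] by simp
    show integrable: "integrable lborel (\<lambda>t. \<psi> t * tent_fourier a t)"
      using bound that \<open>K \<ge> 0\<close> by (intro Bochner_Integration.integrable_bound[OF majorant] AE_I2) auto
    have "(LBINT t. norm (\<psi> t * tent_fourier a t)) \<le> (LBINT t. 8 * K * (a / (1 + (a * t)\<^sup>2)))"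
      by (intro integral_mono[OF integrable_norm[OF integrable] majorant] bound)
    also have "\<dots> = 8 * K * pi"
      unfolding integral_mult_right_zero integral_scaled_inverse_1_plus_square[OF that] ..
    finally show "(LBINT t. norm (\<psi> t * tent_fourier a t)) \<le> 8 * K * pi" .
  qed
  have "integrable M (\<lambda>a. LBINT t. norm (\<psi> t * tent_fourier a t))"
    using pos by (intro integrable_const_bound[where B="8 * K * pi"])
      (auto elim!: eventually_mono simp: integral_slice)
  moreover have "AE a in M. integrable lborel (\<lambda>t. \<psi> t * tent_fourier a t)"
    using pos by eventually_elim (rule integrable_slice)
  ultimately show ?thesis
    by (intro Fubini_integrable) auto
qed

theorem fourier_gen_eq_tent_mixture:
  assumes pos: "AE a in M. a > 0"
  shows "fourier_gen_eq (\<lambda>r. complex_of_real (LINT a|M. tent a r)) (\<lambda>t. LINT a|M. tent_fourier a t)"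
  unfolding fourier_gen_eq_def
proof (intro allI impI conjI)
  fix \<psi> assume \<psi>: "test_function \<psi>"
  interpret P1: pair_sigma_finite lborel M
    by (intro pair_sigma_finite.intro lborel.sigma_finite_measure_axioms sigma_finite_measure_axioms)
  interpret P2: pair_sigma_finite M lborel
    by (intro pair_sigma_finite.intro lborel.sigma_finite_measure_axioms sigma_finite_measure_axioms)
  have [measurable]: "\<psi> \<in> borel_measurable borel" "fourier \<psi> \<in> borel_measurable borel"
    using borel_measurable_test_function[OF \<psi>] borel_measurable_fourier[OF \<psi>] by simp_all
  have integrable1: "integrable (lborel \<Otimes>\<^sub>M M) (\<lambda>(r, a). complex_of_real (tent a r) * fourier \<psi> r)"
    by (rule integrable_pair_tent_mixture[OF pos integrable_fourier[OF \<psi>]])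
  have integrable2: "integrable (M \<Otimes>\<^sub>M lborel) (\<lambda>(a, t). \<psi> t * tent_fourier a t)"
    by (rule integrable_pair_tent_fourier[OF pos \<psi>])
  have left: "complex_of_real (LINT a|M. tent a r) * fourier \<psi> r
      = (LINT a|M. complex_of_real (tent a r) * fourier \<psi> r)" for r
    by (simp add: integral_mult_left_zero)
  have right: "(LINT a|M. tent_fourier a t) * \<psi> t = (LINT a|M. \<psi> t * tent_fourier a t)" for t
    by (simp add: integral_mult_right_zero mult.commute)
  show "integrable lborel (\<lambda>r. complex_of_real (LINT a|M. tent a r) * fourier \<psi> r)"
    unfolding left using P1.integrable_fst[OF integrable1] .
  show "integrable lborel (\<lambda>t. (LINT a|M. tent_fourier a t) * \<psi> t)"
    unfolding right using P2.integrable_snd[OF integrable2] .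
  have "(LBINT r. complex_of_real (LINT a|M. tent a r) * fourier \<psi> r)
      = (LINT a|M. (LBINT r. complex_of_real (tent a r) * fourier \<psi> r))"
    unfolding left using P1.Fubini_integral[OF integrable1] by simp
  also have "\<dots> = (LINT a|M. (LBINT t. \<psi> t * tent_fourier a t))"
    using pos by (intro integral_cong_AE) (auto elim!: eventually_mono simp: integral_tent_fourier_pairing[OF _ \<psi>])
  also have "\<dots> = (LBINT t. (LINT a|M. tent_fourier a t) * \<psi> t)"
    unfolding right using P2.Fubini_integral[OF integrable2] by simp
  finally show "(LBINT r. complex_of_real (LINT a|M. tent a r) * fourier \<psi> r)
      = (LBINT t. (LINT a|M. tent_fourier a t) * \<psi> t)" .
qed

end

section \<open>The inverse-biased law\<close>

lemma (in real_distribution) AE_pos_if_cdf_nonpos: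
  assumes "\<forall>x\<le>0. cdf M x = 0"
  shows "AE x in M. x > 0"
proof -
  have "measure M {..0} = 0"
    using assms by (simp add: cdf_def)
  then have "{..0} \<in> null_sets M"
    by (simp add: emeasure_eq_measure null_sets_def)
  then show ?thesis
    by (rule AE_I') auto
qed

text \<open>The law of \<open>X\<close> reweighted by \<open>1 / x\<close>, normalised by \<open>C = E[1 / X]\<close>: the law of \<open>X\<^sup>~\<close>.\<close>
definition inverse_biased :: "real measure \<Rightarrow> real measure" where
  "inverse_biased D = density D (\<lambda>x. ennreal (1 / ((LINT y|D. 1 / y) * x)))"

locale inverse_integrable_distribution = real_distribution +
  assumes AE_pos: "AE x in M. x > 0"
    and integrable_inverse: "integrable M (\<lambda>x. 1 / x)"
begin

abbreviation inverse_moment :: real where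
  "inverse_moment \<equiv> LINT x|M. 1 / x"

lemma inverse_moment_gt_0: "inverse_moment > 0"
proof -
  have nonneg: "AE x in M. 0 \<le> 1 / x"
    using AE_pos by eventually_elim simp
  moreover have "inverse_moment \<noteq> 0"
  proof
    assume "inverse_moment = 0"
    then have "AE x in M. 1 / x = 0"
      using integral_nonneg_eq_0_iff_AE[OF integrable_inverse nonneg] by simp
    with AE_pos have "AE x in M. False"
      by eventually_elim simp
    then show False
      by simp
  qed
  ultimately show ?thesis
    using integral_nonneg_AE[OF nonneg] by linarith
qed

lemma integrable_indicator_inverse: "integrable M (\<lambda>x. indicator A x / x)" if "A \<in> sets borel"
  using integrable_real_mult_indicator[OF _ integrable_inverse, of A] that by (simp add: mult.commute)

lemma measure_inverse_biased:
  assumes "A \<in> sets borel"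
  shows "emeasure (inverse_biased M) A = ennreal ((LINT x|M. indicator A x / x) / inverse_moment)"
    and "measure (inverse_biased M) A = (LINT x|M. indicator A x / x) / inverse_moment"
proof -
  have nonneg: "AE x in M. 0 \<le> indicator A x / (inverse_moment * x)"
    using AE_pos by eventually_elim (use inverse_moment_gt_0 in simp)
  have "integrable M (\<lambda>x. indicator A x / x / inverse_moment)"
    using integrable_indicator_inverse[OF assms] by (rule integrable_divide)
  then have integrable: "integrable M (\<lambda>x. indicator A x / (inverse_moment * x))"
    by (simp add: field_simps)
  have "emeasure (inverse_biased M) A = (\<integral>\<^sup>+x. ennreal (1 / (inverse_moment * x)) * indicator A x \<partial>M)"
    unfolding inverse_biased_def using assms by (subst emeasure_density) auto
  also have "\<dots> = (\<integral>\<^sup>+x. ennreal (indicator A x / (inverse_moment * x)) \<partial>M)"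
    by (intro nn_integral_cong) (simp split: split_indicator)
  also have "\<dots> = ennreal (LINT x|M. indicator A x / (inverse_moment * x))"
    by (rule nn_integral_eq_integral[OF integrable nonneg])
  also have "(LINT x|M. indicator A x / (inverse_moment * x)) = (LINT x|M. indicator A x / x) / inverse_moment"
    unfolding integral_divide_zero[symmetric] by (simp add: field_simps)
  finally show emeasure: "emeasure (inverse_biased M) A = ennreal ((LINT x|M. indicator A x / x) / inverse_moment)" .
  have "(LINT x|M. indicator A x / x) \<ge> 0"
    using AE_pos by (intro integral_nonneg_AE) (auto elim!: eventually_mono)
  then show "measure (inverse_biased M) A = (LINT x|M. indicator A x / x) / inverse_moment"
    using inverse_moment_gt_0 by (simp add: measure_def emeasure)
qed

lemma real_distribution_inverse_biased: "real_distribution (inverse_biased M)"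
proof -
  have "emeasure (inverse_biased M) (space (inverse_biased M)) = 1"
    using measure_inverse_biased(1)[of UNIV] inverse_moment_gt_0 by (simp add: inverse_biased_def)
  then have "prob_space (inverse_biased M)"
    by (rule prob_spaceI)
  then show ?thesis
    by (simp add: real_distribution_def real_distribution_axioms_def inverse_biased_def)
qed

lemma cdf_inverse_biased: "cdf (inverse_biased M) x = (LINT t:{..x}|M. 1 / (inverse_moment * t))"
  using measure_inverse_biased(2)[of "{..x}"]
  unfolding cdf_def set_lebesgue_integral_def integral_divide_zero[symmetric]
  by (simp add: field_simps)

lemma char_inverse_biased:
  "complex_of_real inverse_moment * char (inverse_biased M) t = (LINT x|M. complex_of_real (1 / x) * iexp (t * x))"
proof -
  have "char (inverse_biased M) t = (LINT x|M. (1 / (inverse_moment * x)) *\<^sub>R iexp (t * x))"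
    unfolding char_def inverse_biased_def
    by (rule integral_density) (use AE_pos inverse_moment_gt_0 in \<open>auto elim!: eventually_mono\<close>)
  also have "\<dots> = (LINT x|M. complex_of_real (1 / x) * iexp (t * x)) / complex_of_real inverse_moment"
    unfolding integral_divide_zero[symmetric] by (simp add: scaleR_conv_of_real field_simps)
  finally show ?thesis
    using inverse_moment_gt_0 by (simp add: field_simps)
qed

lemma integral_tent_fourier_eq:
  "(LINT a|M. tent_fourier a t)
     = complex_of_real (inverse_moment / t\<^sup>2) * (2 - char (inverse_biased M) t - char (inverse_biased M) (- t))"
proof -
  define h where "h s a = complex_of_real (1 / a) * iexp (s * a)" for s a
  have h_integrable: "integrable M (h s)" for s
  proof (rule Bochner_Integration.integrable_bound[OF integrable_inverse])
    show "h s \<in> borel_measurable M"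
      unfolding h_def by measurable
    show "AE x in M. norm (h s x) \<le> norm (1 / x)"
      unfolding h_def by (intro AE_I2) (simp add: norm_mult del: of_real_divide)
  qed
  have inverse_integrable: "integrable M (\<lambda>a. 2 * complex_of_real (1 / a))"
    using integrable_of_real[OF integrable_inverse] by (rule integrable_mult_right)
  have "tent_fourier a t = complex_of_real (1 / t\<^sup>2) * (2 * complex_of_real (1 / a) - h t a - h (- t) a)" for a
    unfolding tent_fourier_def h_def by (cases "a = 0"; cases "t = 0") (simp_all add: field_simps mult.commute)
  then have "(LINT a|M. tent_fourier a t)
      = complex_of_real (1 / t\<^sup>2) * ((LINT a|M. 2 * complex_of_real (1 / a)) - (LINT a|M. h t a) - (LINT a|M. h (- t) a))"
    using inverse_integrable h_integrable by (simp add: integral_mult_right_zero)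
  also have "\<dots> = complex_of_real (1 / t\<^sup>2) * complex_of_real inverse_moment
      * (2 - char (inverse_biased M) t - char (inverse_biased M) (- t))"
  proof -
    have "(LINT a|M. h s a) = complex_of_real inverse_moment * char (inverse_biased M) s" for s
      unfolding h_def by (rule char_inverse_biased[symmetric])
    moreover have "(LINT a|M. 2 * complex_of_real (1 / a)) = 2 * complex_of_real inverse_moment"
      by (simp only: integral_mult_right_zero integral_complex_of_real)
    ultimately show ?thesis
      by (simp add: algebra_simps add_divide_distrib)
  qed
  finally show ?thesis
    by simp
qed

lemma integral_tent_eq_tail:
  assumes r: "r \<ge> 0"
  shows "(LINT a|M. tent a r) = (1 - cdf M r) - r * (LINT a|M. indicator {r<..} a / a)"
proof -
  have indicator_integrable: "integrable M (\<lambda>a. indicator {r<..} a :: real)"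
    by (rule integrable_const_bound[where B=1]) auto
  have tail_integrable: "integrable M (\<lambda>a. indicator {r<..} a / a)"
    by (rule integrable_indicator_inverse) simp
  have "(LINT a|M. tent a r) = (LINT a|M. indicator {r<..} a - r * (indicator {r<..} a / a))"
  proof (rule integral_cong_AE)
    show "AE a in M. tent a r = indicator {r<..} a - r * (indicator {r<..} a / a)"
      using AE_pos
      by eventually_elim (use r in \<open>auto simp: tent_def max_def field_simps split: split_indicator\<close>)
  qed auto
  also have "\<dots> = (LINT a|M. indicator {r<..} a) - r * (LINT a|M. indicator {r<..} a / a)"
    by (simp only: Bochner_Integration.integral_diff[OF indicator_integrable
          integrable_mult_right[OF tail_integrable]] integral_mult_right_zero)
  also have "(LINT a|M. indicator {r<..} a) = 1 - cdf M r"
    using prob_compl[of "{..r}"] by (simp add: cdf_def Compl_eq_Diff_UNIV[symmetric])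
  finally show ?thesis .
qed

lemma one_minus_cdf_inverse_biased:
  "1 - cdf (inverse_biased M) r = (LINT x|M. indicator {r<..} x / x) / inverse_moment"
proof -
  interpret biased: real_distribution "inverse_biased M"
    by (rule real_distribution_inverse_biased)
  show ?thesis
    using biased.prob_compl[of "{..r}"] measure_inverse_biased(2)[of "{r<..}"]
    by (simp add: cdf_def Compl_eq_Diff_UNIV[symmetric])
qed

lemma integral_tent_eq:
  assumes "r \<ge> 0"
  shows "(LINT a|M. tent a r) = (1 - cdf M r) - inverse_moment * r * (1 - cdf (inverse_biased M) r)"
  using integral_tent_eq_tail[OF assms] inverse_moment_gt_0 by (simp add: one_minus_cdf_inverse_biased)

end

theorem theorem2:
  fixes M :: "'a measure" and X :: "'a \<Rightarrow> real"
    and N :: "'b measure" and Xt :: "'b \<Rightarrow> real"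
    and k :: "real \<Rightarrow> real" and C :: real
  assumes "prob_space M" and "X \<in> borel_measurable M"
    and "\<forall>x\<le>0. cdf (distr M borel X) x = 0"
    and k_def: "\<forall>r. k r = (LINT x:{0..}|distr M borel X. max 0 (1 - \<bar>r\<bar> / x))"
    and "integrable (distr M borel X) (\<lambda>x. 1 / x)"
    and C_def: "C = (LINT x|distr M borel X. 1 / x)"
    and "prob_space N" and "Xt \<in> borel_measurable N"
    and "\<forall>x. cdf (distr N borel Xt) x = (LINT t:{..x}|distr M borel X. 1 / (C * t))"
  shows "(\<forall>r\<ge>0. k r = (1 - cdf (distr M borel X) r)
                       - C * r * (1 - cdf (distr N borel Xt) r))
    \<and> fourier_gen_eq (\<lambda>r. complex_of_real (k r))
        (\<lambda>t. complex_of_real (C / t\<^sup>2) *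
             (2 - char (distr N borel Xt) t - char (distr N borel Xt) (- t)))"
proof -
  define D where "D = distr M borel X"
  interpret D: real_distribution D
    unfolding D_def by (rule prob_space.real_distribution_distr[OF assms(1,2)])
  interpret D: inverse_integrable_distribution D
    using D.AE_pos_if_cdf_nonpos assms(3,5) by unfold_locales (simp_all add: D_def)
  have C: "C = D.inverse_moment"
    using C_def by (simp add: D_def)
  have Xt: "distr N borel Xt = inverse_biased D"
    using assms(9) D.cdf_inverse_biased
    by (intro cdf_unique prob_space.real_distribution_distr[OF assms(7,8)] D.real_distribution_inverse_biased)
       (simp add: C D_def fun_eq_iff)
  have k: "k r = (LINT a|D. tent a r)" for r
    unfolding k_def[rule_format] D_def[symmetric] set_lebesgue_integral_def
    using D.AE_pos by (intro integral_cong_AE) (auto elim!: eventually_mono simp: tent_def)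
  show ?thesis
    unfolding Xt C D_def[symmetric] k
    using D.integral_tent_eq D.fourier_gen_eq_tent_mixture[OF D.AE_pos]
    by (simp add: D.integral_tent_fourier_eq)
qed
end
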